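(* Let $(\mathbf X_n^I)_{n\ge1}$ be adapted to the filtration $\mathcal G=(\mathcal G_n)_{n\ge0}$. The following are equivalent: (i) $(\mathbf X_n^I)$ is partially $\mathcal G$-c.i.d.; (ii) for every $j\in I$ and every bounded measurable $f:\mathbb X\to\mathbb R$, $\big(\mathbb E[f(X_{n+1,j})\mid\mathcal G_n^j]\big)_{n\ge0}$ is a martingale with respect to $\mathcal G^j=(\mathcal G_n^j)_{n\ge0}$; (iii) for every $n\ge0$ and $j\in I$, $(\mathbf X^{I\setminus\{j\}}_{n+1},X_{\tau+1,j})\overset{d}{=}(\mathbf X^{I\setminus\{j\}}_{n+1},X_{n+1,j})$ for every finite $\mathcal G$-stopping time $\tau$ with $\tau\ge n$.
   Context: All random elements live on $(\Omega,\mathcal F,\mathbb P)$; $\mathbb X$ is Polish with Borel $\sigma$-algebra $\mathcal X$; $I$ is a finite or countable index set; $[X_{n,i}]_{n\ge1,i\in I}$ is an array of $\mathbb X$-valued random variables with rows $\mathbf X_n^I=(X_{n,i})_{i\in I}$, and $\mathbf X_n^J=(X_{n,i})_{i\in J}$ for $J\subset I$. For a filtration $\mathcal G=(\mathcal G_n)_{n\ge0}$ and $j\in I$, $\mathcal G_n^j=\mathcal G_n\vee\sigma(X_{n+1,i}:i\ne j)$. The process $(\mathbf X_n^I)$ is partially $\mathcal G$-c.i.d. if it is adapted to $\mathcal G$ and, for every $j\in I$, $k\ge1$, $n\ge0$ and bounded measurable $f:\mathbb X\to\mathbb R$, $\mathbb E[f(X_{n+1,j})\mid\mathcal G_n^j]=\mathbb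 E[f(X_{n+k,j})\mid\mathcal G_n^j]$ a.s. *)

theory Defs
  imports "HOL-Probability.Probability"
begin

text \<open>Standing setup. The array entry X_{n,i} is X n i (rows n \<ge> 1; the value at n = 0 is
  irrelevant). A filtration G = (G_n)_{n \<ge> 0} is a family of sub-sigma-algebras of M,
  increasing in n.\<close>

definition is_filtration :: "'w measure \<Rightarrow> (nat \<Rightarrow> 'w measure) \<Rightarrow> bool" where
  "is_filtration M G \<longleftrightarrow> (\<forall>n. subalgebra M (G n)) \<and> (\<forall>n m. n \<le> m \<longrightarrow> sets (G n) \<subseteq> sets (G m))"

definition adapted_rows ::
  "(nat \<Rightarrow> 'w measure) \<Rightarrow> 'i set \<Rightarrow> (nat \<Rightarrow> 'i \<Rightarrow> 'w \<Rightarrow> 'x::topological_space) \<Rightarrow> bool" where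
  "adapted_rows G I X \<longleftrightarrow> (\<forall>n\<ge>1. \<forall>i\<in>I. X n i \<in> borel_measurable (G n))"

definition Gj ::
  "'w measure \<Rightarrow> (nat \<Rightarrow> 'w measure) \<Rightarrow> 'i set \<Rightarrow> (nat \<Rightarrow> 'i \<Rightarrow> 'w \<Rightarrow> 'x::topological_space)
     \<Rightarrow> 'i \<Rightarrow> nat \<Rightarrow> 'w measure" where
  "Gj M G I X j n = sigma (space M)
      (sets (G n) \<union> (\<Union>i\<in>I - {j}. {X (Suc n) i -` A \<inter> space M | A. A \<in> sets borel}))"

definition bdd_meas :: "('x::topological_space \<Rightarrow> real) \<Rightarrow> bool" where
  "bdd_meas f \<longleftrightarrow> f \<in> borel_measurable borel \<and> bounded (range f)"

definition partially_cid ::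
  "'w measure \<Rightarrow> (nat \<Rightarrow> 'w measure) \<Rightarrow> 'i set \<Rightarrow> (nat \<Rightarrow> 'i \<Rightarrow> 'w \<Rightarrow> 'x::topological_space) \<Rightarrow> bool" where
  "partially_cid M G I X \<longleftrightarrow> adapted_rows G I X \<and>
     (\<forall>j\<in>I. \<forall>k\<ge>1. \<forall>n. \<forall>f. bdd_meas f \<longrightarrow>
        (AE \<omega> in M. real_cond_exp M (Gj M G I X j n) (\<lambda>\<omega>. f (X (n + 1) j \<omega>)) \<omega>
                    = real_cond_exp M (Gj M G I X j n) (\<lambda>\<omega>. f (X (n + k) j \<omega>)) \<omega>))"

definition martingale :: "'w measure \<Rightarrow> (nat \<Rightarrow> 'w measure) \<Rightarrow> (nat \<Rightarrow> 'w \<Rightarrow> real) \<Rightarrow> bool" where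
  "martingale M F Y \<longleftrightarrow> (\<forall>n. Y n \<in> borel_measurable (F n) \<and> integrable M (Y n)) \<and>
     (\<forall>n m. n \<le> m \<longrightarrow> (AE \<omega> in M. real_cond_exp M (F n) (Y m) \<omega> = Y n \<omega>))"

end

theory Submission
  imports Defs
begin

text \<open>By the defining property of conditional expectations, partial c.i.d. says that for all
  j, k \<ge> 1, n and every A in G_n^j the integrals of f(X_{n+k,j}) and f(X_{n+1,j}) over A agree;
  (ii) is then just the tower property. For (iii), a stopping time \<tau> \<ge> n is split along the
  events {\<tau> = t}, which lie in G_t \<subseteq> G_t^j, so on each of them X_{\<tau>+1,j} may be replaced
  by X_{N+1,j} for any bound N of \<tau>, and then by X_{n+1,j}; unbounded \<tau> are handled by
  truncation and dominated convergence. Conversely, the two-valued stopping times equal to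
  n + k - 1 on B \<in> G_n and to n elsewhere give the set-integral identity on the sets
  B \<inter> {X_{n+1}^{I-{j}} \<in> C}, an \<inter>-stable generator of G_n^j, and a Dynkin argument extends it
  to all of G_n^j.\<close>

lemma set_integrable_of_integrable:
  fixes f :: "'a \<Rightarrow> real"
  shows "integrable M f \<Longrightarrow> A \<in> sets M \<Longrightarrow> set_integrable M A f"
  unfolding set_integrable_def by (rule integrable_mult_indicator)

lemma set_integral_complement:
  fixes f :: "'a \<Rightarrow> real"
  assumes "integrable M f" "A \<in> sets M"
  shows "(\<integral>x\<in>space M - A. f x \<partial>M) = (\<integral>x. f x \<partial>M) - (\<integral>x\<in>A. f x \<partial>M)"
proof -
  have "(\<integral>x\<in>space M. f x \<partial>M) = (\<integral>x\<in>A. f x \<partial>M) + (\<integral>x\<in>space M - A. f x \<partial>M)"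
    using set_integral_Un[of A "space M - A" M f] sets.sets_into_space[OF assms(2)]
      set_integrable_of_integrable[OF assms(1)] assms(2) by (simp add: Un_absorb1)
  then show ?thesis using set_integral_space[OF assms(1)] by simp
qed

lemma set_integral_eq_on_sigma_sets:
  fixes u v :: "'a \<Rightarrow> real"
  assumes E: "Int_stable E" "E \<subseteq> sets M" "space M \<in> E"
    and uv: "integrable M u" "integrable M v"
    and eq: "\<And>A. A \<in> E \<Longrightarrow> (\<integral>x\<in>A. u x \<partial>M) = (\<integral>x\<in>A. v x \<partial>M)"
    and A: "A \<in> sigma_sets (space M) E"
  shows "(\<integral>x\<in>A. u x \<partial>M) = (\<integral>x\<in>A. v x \<partial>M)"
proof -
  have sigma_E: "sigma_sets (space M) E \<subseteq> sets M"
    using E(2) by (rule sets.sigma_sets_subset)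
  have "E \<subseteq> Pow (space M)"
    using E(2) sets.sets_into_space by blast
  from E(1) this A show ?thesis
  proof (induction rule: sigma_sets_induct_disjoint)
    case (basic A)
    then show ?case by (rule eq)
  next
    case (compl A)
    then have "A \<in> sets M" using sigma_E by blast
    moreover have "(\<integral>x. u x \<partial>M) = (\<integral>x. v x \<partial>M)"
      using eq[OF E(3)] by (simp add: set_integral_space uv)
    ultimately show ?case
      using compl.IH by (simp add: set_integral_complement uv)
  next
    case (union A)
    then have "range A \<subseteq> sets M" using sigma_E by blast
    with union show ?case
      using uv by (simp add: lebesgue_integral_countable_add disjoint_family_on_def
          set_integrable_of_integrable)
  qed (simp add: set_lebesgue_integral_def)
qed

lemma (in sigma_finite_subalgebra) real_cond_exp_AE_eq_iff_set_integral_eq: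
  fixes u v :: "'a \<Rightarrow> real"
  assumes u: "integrable M u" and v: "integrable M v"
  shows "(AE x in M. real_cond_exp M F u x = real_cond_exp M F v x)
    \<longleftrightarrow> (\<forall>A\<in>sets F. (\<integral>x\<in>A. u x \<partial>M) = (\<integral>x\<in>A. v x \<partial>M))"
proof
  assume ae: "AE x in M. real_cond_exp M F u x = real_cond_exp M F v x"
  show "\<forall>A\<in>sets F. (\<integral>x\<in>A. u x \<partial>M) = (\<integral>x\<in>A. v x \<partial>M)"
  proof
    fix A assume A: "A \<in> sets F"
    then have "A \<in> sets M" using subalg by (auto simp: subalgebra_def)
    have "(\<integral>x\<in>A. real_cond_exp M F u x \<partial>M) = (\<integral>x\<in>A. real_cond_exp M F v x \<partial>M)"
      using ae \<open>A \<in> sets M\<close> by (intro set_lebesgue_integral_cong_AE) auto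
    then show "(\<integral>x\<in>A. u x \<partial>M) = (\<integral>x\<in>A. v x \<partial>M)"
      using real_cond_exp_intA[OF u A] real_cond_exp_intA[OF v A] by simp
  qed
next
  assume "\<forall>A\<in>sets F. (\<integral>x\<in>A. u x \<partial>M) = (\<integral>x\<in>A. v x \<partial>M)"
  then show "AE x in M. real_cond_exp M F u x = real_cond_exp M F v x"
    using u v real_cond_exp_int(1)[OF v]
    by (intro real_cond_exp_charact) (auto simp: real_cond_exp_intA[OF v])
qed

lemma distr_pair_eqI:
  assumes M: "finite_measure M"
    and Y: "Y \<in> M \<rightarrow>\<^sub>M A" and Z: "Z \<in> M \<rightarrow>\<^sub>M B" and Z': "Z' \<in> M \<rightarrow>\<^sub>M B"
    and eq: "\<And>a b. a \<in> sets A \<Longrightarrow> b \<in> sets B \<Longrightarrow>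
      measure M {x\<in>space M. Y x \<in> a \<and> Z x \<in> b} = measure M {x\<in>space M. Y x \<in> a \<and> Z' x \<in> b}"
  shows "distr M (A \<Otimes>\<^sub>M B) (\<lambda>x. (Y x, Z x)) = distr M (A \<Otimes>\<^sub>M B) (\<lambda>x. (Y x, Z' x))"
proof -
  interpret finite_measure M by (rule M)
  let ?E = "{a \<times> b | a b. a \<in> sets A \<and> b \<in> sets B}"
  let ?\<Omega> = "space A \<times> space B"
  have emeasure_rect: "emeasure (distr M (A \<Otimes>\<^sub>M B) (\<lambda>x. (Y x, W x))) (a \<times> b)
      = measure M {x\<in>space M. Y x \<in> a \<and> W x \<in> b}"
    if W: "W \<in> M \<rightarrow>\<^sub>M B" and a: "a \<in> sets A" and b: "b \<in> sets B" for W a b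
  proof -
    have "(\<lambda>x. (Y x, W x)) -` (a \<times> b) \<inter> space M = {x\<in>space M. Y x \<in> a \<and> W x \<in> b}"
      by auto
    then show ?thesis
      using a b Y W by (simp add: emeasure_distr emeasure_eq_measure)
  qed
  show ?thesis
  proof (rule measure_eqI_generator_eq[where E="?E" and \<Omega>="?\<Omega>" and A="\<lambda>_. ?\<Omega>"])
    show "Int_stable ?E" by (rule Int_stable_pair_measure_generator)
    show "?E \<subseteq> Pow ?\<Omega>" by (rule pair_measure_closed)
    show "range (\<lambda>_. ?\<Omega>) \<subseteq> ?E" by blast
    show "emeasure (distr M (A \<Otimes>\<^sub>M B) (\<lambda>x. (Y x, Z x))) ?\<Omega> \<noteq> \<infinity>"
      using emeasure_rect[OF Z sets.top sets.top] by simp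
  next
    fix X assume "X \<in> ?E"
    then show "emeasure (distr M (A \<Otimes>\<^sub>M B) (\<lambda>x. (Y x, Z x))) X
      = emeasure (distr M (A \<Otimes>\<^sub>M B) (\<lambda>x. (Y x, Z' x))) X"
      using emeasure_rect[OF Z] emeasure_rect[OF Z'] eq by auto
  qed (simp_all add: sets_pair_measure)
qed

lemma set_integral_vimage_eq_of_distr_pair_eq:
  fixes f :: "'b \<Rightarrow> real"
  assumes Y: "Y \<in> M \<rightarrow>\<^sub>M A" and Z: "Z \<in> M \<rightarrow>\<^sub>M B" and Z': "Z' \<in> M \<rightarrow>\<^sub>M B"
    and C: "C \<in> sets A" and f: "f \<in> borel_measurable B"
    and eq: "distr M (A \<Otimes>\<^sub>M B) (\<lambda>x. (Y x, Z x)) = distr M (A \<Otimes>\<^sub>M B) (\<lambda>x. (Y x, Z' x))"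
  shows "(\<integral>x\<in>Y -` C \<inter> space M. f (Z x) \<partial>M) = (\<integral>x\<in>Y -` C \<inter> space M. f (Z' x) \<partial>M)"
proof -
  have g: "(\<lambda>p. indicator C (fst p) * f (snd p)) \<in> borel_measurable (A \<Otimes>\<^sub>M B)"
    using C f by measurable
  have "(\<integral>x\<in>Y -` C \<inter> space M. f (W x) \<partial>M)
      = (\<integral>p. indicator C (fst p) * f (snd p) \<partial>distr M (A \<Otimes>\<^sub>M B) (\<lambda>x. (Y x, W x)))"
    if W: "W \<in> M \<rightarrow>\<^sub>M B" for W
  proof -
    have "(\<integral>x\<in>Y -` C \<inter> space M. f (W x) \<partial>M) = (\<integral>x. indicator C (Y x) * f (W x) \<partial>M)"
      unfolding set_lebesgue_integral_def
      by (rule Bochner_Integration.integral_cong) (simp_all add: indicator_def)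
    then show ?thesis
      using measurable_Pair[OF Y W] g by (simp add: integral_distr)
  qed
  then show ?thesis
    using Z Z' eq by simp
qed

lemma measure_preimage_eq_set_integral:
  assumes "A \<subseteq> space M"
  shows "measure M {x\<in>A. Z x \<in> b} = (\<integral>x\<in>A. indicator b (Z x) \<partial>M)"
proof -
  have "(\<integral>x\<in>A. indicator b (Z x) \<partial>M) = (\<integral>x. indicator {x\<in>A. Z x \<in> b} x \<partial>M)"
    unfolding set_lebesgue_integral_def by (rule Bochner_Integration.integral_cong) (auto split: split_indicator)
  also have "\<dots> = measure M ({x\<in>A. Z x \<in> b} \<inter> space M)"
    by (rule Bochner_Integration.integral_indicator)
  finally show ?thesis
    using assms by (simp add: Int_absorb2 subset_eq)
qed

lemma (in filtration) stopping_time_two_valued: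
  assumes B: "B \<in> sets (F s)" and "s \<le> t"
  shows "stopping_time F (\<lambda>\<omega>. if \<omega> \<in> B then t else s)"
proof
  fix r
  show "Measurable.pred (F r) (\<lambda>\<omega>. (if \<omega> \<in> B then t else s) \<le> r)"
  proof (cases "s \<le> r")
    case True
    then have "B \<in> sets (F r)" using B sets_F_mono by blast
    then show ?thesis by (simp add: if_distrib[of "\<lambda>x. x \<le> r"])
  next
    case False
    then have "\<not> t \<le> r" using \<open>s \<le> t\<close> by (meson order_trans)
    with False show ?thesis by simp
  qed
qed

lemma bdd_meas_bounded: "bdd_meas f \<Longrightarrow> \<exists>B. \<forall>x. \<bar>f x\<bar> \<le> B"
  unfolding bdd_meas_def bounded_iff by auto

lemma bdd_meas_indicator: "b \<in> sets borel \<Longrightarrow> bdd_meas (indicator b :: 'x::topological_space \<Rightarrow> real)"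
  unfolding bdd_meas_def bounded_iff by (auto split: split_indicator)

lemma integrable_bounded_comp:
  fixes f :: "'b::topological_space \<Rightarrow> real"
  assumes "finite_measure M" "Z \<in> borel_measurable M" "f \<in> borel_measurable borel" "\<And>x. \<bar>f x\<bar> \<le> B"
  shows "integrable M (\<lambda>\<omega>. f (Z \<omega>))"
proof -
  interpret finite_measure M by (rule assms(1))
  show ?thesis
    using assms(2-) by (intro integrable_const_bound[where B=B]) auto
qed

locale adapted_array = finite_measure M for M :: "'w measure" +
  fixes G :: "nat \<Rightarrow> 'w measure" and I :: "'i set"
    and X :: "nat \<Rightarrow> 'i \<Rightarrow> 'w \<Rightarrow> 'x::topological_space"
  assumes filtration: "is_filtration M G" and adapted: "adapted_rows G I X"
begin

abbreviation H :: "'i \<Rightarrow> nat \<Rightarrow> 'w measure" where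
  "H j n \<equiv> Gj M G I X j n"

abbreviation rest_row :: "'i \<Rightarrow> nat \<Rightarrow> 'w \<Rightarrow> 'i \<Rightarrow> 'x" where
  "rest_row j n \<omega> \<equiv> \<lambda>i\<in>I - {j}. X (n + 1) i \<omega>"

lemma subalgebra_G: "subalgebra M (G n)"
  using filtration by (auto simp: is_filtration_def)

lemma space_G [simp]: "space (G n) = space M"
  using subalgebra_G by (auto simp: subalgebra_def)

lemma sets_G_subset_M: "sets (G n) \<subseteq> sets M"
  using subalgebra_G by (auto simp: subalgebra_def)

lemma sets_G_mono: "n \<le> m \<Longrightarrow> sets (G n) \<subseteq> sets (G m)"
  using filtration by (auto simp: is_filtration_def)

lemma filtration_G: "filtration (space M) G"
  by unfold_locales (auto simp: sets_G_mono)

lemma measurable_X_G: "1 \<le> n \<Longrightarrow> n \<le> m \<Longrightarrow> i \<in> I \<Longrightarrow> X n i \<in> borel_measurable (G m)"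
  using adapted sets_G_mono[of n m] by (auto simp: adapted_rows_def measurable_def)

lemma measurable_X: "1 \<le> n \<Longrightarrow> i \<in> I \<Longrightarrow> X n i \<in> borel_measurable M"
  using measurable_X_G[of n n i] measurable_from_subalg[OF subalgebra_G] by blast

lemma measurable_stopping_time_count_space:
  assumes "stopping_time G \<tau>"
  shows "\<tau> \<in> M \<rightarrow>\<^sub>M count_space UNIV"
proof -
  have "{\<omega>\<in>space M. \<tau> \<omega> = t} \<in> sets M" for t
    using filtration.stopping_time_eq_const[OF filtration_G assms] sets_G_subset_M
    by (auto simp: pred_def)
  then show ?thesis
    by (auto simp: measurable_count_space_eq2_countable vimage_def Int_def conj_commute)
qed

lemma measurable_X_random_time:
  "j \<in> I \<Longrightarrow> \<sigma> \<in> M \<rightarrow>\<^sub>M count_space UNIV \<Longrightarrow> (\<lambda>\<omega>. X (\<sigma> \<omega> + 1) j \<omega>) \<in> borel_measurable M"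
  by (rule measurable_compose_countable[where f="\<lambda>t \<omega>. X (t + 1) j \<omega>"]) (auto intro: measurable_X)

lemma integrable_bdd_meas_X_random_time:
  assumes "bdd_meas f" "j \<in> I" "\<sigma> \<in> M \<rightarrow>\<^sub>M count_space UNIV"
  shows "integrable M (\<lambda>\<omega>. f (X (\<sigma> \<omega> + 1) j \<omega>))"
  using assms bdd_meas_bounded[OF assms(1)] measurable_X_random_time[OF assms(2,3)]
  by (auto simp: bdd_meas_def intro: integrable_bounded_comp[OF finite_measure_axioms])

lemma integrable_bdd_meas_X:
  "bdd_meas f \<Longrightarrow> j \<in> I \<Longrightarrow> integrable M (\<lambda>\<omega>. f (X (n + 1) j \<omega>))"
  using integrable_bdd_meas_X_random_time[of f j "\<lambda>_. n"] by simp

lemma sets_H: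
  "sets (H j n) = sigma_sets (space M)
     (sets (G n) \<union> (\<Union>i\<in>I - {j}. {X (Suc n) i -` A \<inter> space M | A. A \<in> sets borel}))"
  unfolding Gj_def using sets.sets_into_space[of _ "G n"] by (intro sets_measure_of) auto

lemma space_H [simp]: "space (H j n) = space M"
  unfolding Gj_def using sets.sets_into_space[of _ "G n"] by (intro space_measure_of) auto

lemma sets_H_subsetI:
  assumes "sets (G n) \<subseteq> sets N" "space N = space M"
    and "\<And>i. i \<in> I - {j} \<Longrightarrow> X (Suc n) i \<in> borel_measurable N"
  shows "sets (H j n) \<subseteq> sets N"
  unfolding sets_H
proof (rule sets.sigma_sets_subset'[of _ N, unfolded assms(2)])
  show "sets (G n) \<union> (\<Union>i\<in>I - {j}. {X (Suc n) i -` A \<inter> space M |A. A \<in> sets borel}) \<subseteq> sets N"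
    using assms(1) measurable_sets[OF assms(3)] assms(2) by fastforce
  show "space M \<in> sets N"
    using assms(2) sets.top[of N] by simp
qed

lemma sets_G_subset_H: "sets (G n) \<subseteq> sets (H j n)"
  unfolding sets_H by (rule order_trans[OF _ sigma_sets_superset_generator]) auto

lemma measurable_X_H:
  assumes "i \<in> I - {j}" "1 \<le> m" "m \<le> Suc n"
  shows "X m i \<in> borel_measurable (H j n)"
proof (cases "m = Suc n")
  case True
  then show ?thesis using assms(1) by (intro measurableI) (auto simp: sets_H)
next
  case False
  then have "X m i \<in> borel_measurable (G n)" using assms by (intro measurable_X_G) auto
  then show ?thesis using sets_G_subset_H by (auto simp: measurable_def)
qed

lemma subalgebra_H: "subalgebra M (H j n)"
  using sets_H_subsetI[of n M j] sets_G_subset_M measurable_X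
  by (auto simp: subalgebra_def)

lemma sets_H_mono: "n \<le> m \<Longrightarrow> sets (H j n) \<subseteq> sets (H j m)"
  using sets_G_mono sets_G_subset_H measurable_X_H
  by (intro sets_H_subsetI) (blast, simp, auto)

lemma sigma_finite_subalgebra_H: "sigma_finite_subalgebra M (H j n)"
proof -
  interpret finite_measure_subalgebra M "H j n"
    by unfold_locales (rule subalgebra_H)
  show ?thesis ..
qed

lemma measurable_rest_row_H:
  "n \<le> t \<Longrightarrow> rest_row j n \<in> H j t \<rightarrow>\<^sub>M PiM (I - {j}) (\<lambda>_. borel)"
  by (intro measurable_restrict measurable_X_H) auto

lemma measurable_rest_row: "rest_row j n \<in> M \<rightarrow>\<^sub>M PiM (I - {j}) (\<lambda>_. borel)"
  using measurable_from_subalg[OF subalgebra_H measurable_rest_row_H[of n n]] by simp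

lemma real_cond_exp_H_tower:
  assumes "n \<le> m" "bdd_meas f" "j \<in> I"
  shows "AE \<omega> in M. real_cond_exp M (H j n) (real_cond_exp M (H j m) (\<lambda>\<omega>. f (X (p + 1) j \<omega>))) \<omega>
          = real_cond_exp M (H j n) (\<lambda>\<omega>. f (X (p + 1) j \<omega>)) \<omega>"
  using assms sets_H_mono subalgebra_H integrable_bdd_meas_X
  by (intro sigma_finite_subalgebra.real_cond_exp_nested_subalg[OF sigma_finite_subalgebra_H])
    (auto simp: subalgebra_def)

lemma partially_cid_iff_martingale:
  "partially_cid M G I X \<longleftrightarrow> (\<forall>j\<in>I. \<forall>f. bdd_meas f \<longrightarrow>
     martingale M (H j) (\<lambda>n. real_cond_exp M (H j n) (\<lambda>\<omega>. f (X (n + 1) j \<omega>))))"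
proof (intro iffI ballI allI impI)
  fix j and f :: "'x \<Rightarrow> real"
  assume cid: "partially_cid M G I X" and j: "j \<in> I" and f: "bdd_meas f"
  show "martingale M (H j) (\<lambda>n. real_cond_exp M (H j n) (\<lambda>\<omega>. f (X (n + 1) j \<omega>)))"
    unfolding martingale_def
  proof (intro conjI allI impI)
    fix n
    show "integrable M (real_cond_exp M (H j n) (\<lambda>\<omega>. f (X (n + 1) j \<omega>)))"
      using sigma_finite_subalgebra.real_cond_exp_int(1)[OF sigma_finite_subalgebra_H]
        integrable_bdd_meas_X[OF f j] .
  next
    fix n m :: nat assume "n \<le> m"
    then have "AE \<omega> in M. real_cond_exp M (H j n) (\<lambda>\<omega>. f (X (n + 1) j \<omega>)) \<omega>
        = real_cond_exp M (H j n) (\<lambda>\<omega>. f (X (n + (m - n + 1)) j \<omega>)) \<omega>"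
      using cid j f unfolding partially_cid_def by (metis le_add2)
    then show "AE \<omega> in M. real_cond_exp M (H j n) (real_cond_exp M (H j m) (\<lambda>\<omega>. f (X (m + 1) j \<omega>))) \<omega>
        = real_cond_exp M (H j n) (\<lambda>\<omega>. f (X (n + 1) j \<omega>)) \<omega>"
      using real_cond_exp_H_tower[OF \<open>n \<le> m\<close> f j, of m] \<open>n \<le> m\<close> by auto
  qed simp
next
  assume mart: "\<forall>j\<in>I. \<forall>f. bdd_meas f \<longrightarrow>
    martingale M (H j) (\<lambda>n. real_cond_exp M (H j n) (\<lambda>\<omega>. f (X (n + 1) j \<omega>)))"
  show "partially_cid M G I X"
    unfolding partially_cid_def
  proof (intro conjI adapted ballI allI impI)
    fix j and k n :: nat and f :: "'x \<Rightarrow> real"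
    assume j: "j \<in> I" and "1 \<le> k" and f: "bdd_meas f"
    then have le: "n \<le> n + k - 1" and eq: "n + k - 1 + 1 = n + k" by auto
    have "AE \<omega> in M. real_cond_exp M (H j n)
        (real_cond_exp M (H j (n + k - 1)) (\<lambda>\<omega>. f (X (n + k - 1 + 1) j \<omega>))) \<omega>
        = real_cond_exp M (H j n) (\<lambda>\<omega>. f (X (n + 1) j \<omega>)) \<omega>"
      using mart j f le unfolding martingale_def by blast
    then show "AE \<omega> in M. real_cond_exp M (H j n) (\<lambda>\<omega>. f (X (n + 1) j \<omega>)) \<omega>
        = real_cond_exp M (H j n) (\<lambda>\<omega>. f (X (n + k) j \<omega>)) \<omega>"
      using real_cond_exp_H_tower[OF le f j, of "n + k - 1"] unfolding eq by auto
  qed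
qed

lemma partially_cid_iff_set_integral:
  "partially_cid M G I X \<longleftrightarrow> (\<forall>j\<in>I. \<forall>k\<ge>1. \<forall>n f. bdd_meas f \<longrightarrow> (\<forall>A\<in>sets (H j n).
     (\<integral>\<omega>\<in>A. f (X (n + k) j \<omega>) \<partial>M) = (\<integral>\<omega>\<in>A. f (X (n + 1) j \<omega>) \<partial>M)))"
proof -
  have "(AE \<omega> in M. real_cond_exp M (H j n) (\<lambda>\<omega>. f (X (n + 1) j \<omega>)) \<omega>
          = real_cond_exp M (H j n) (\<lambda>\<omega>. f (X (n + k) j \<omega>)) \<omega>)
     \<longleftrightarrow> (\<forall>A\<in>sets (H j n). (\<integral>\<omega>\<in>A. f (X (n + k) j \<omega>) \<partial>M) = (\<integral>\<omega>\<in>A. f (X (n + 1) j \<omega>) \<partial>M))"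
    if "j \<in> I" "1 \<le> k" "bdd_meas f" for j k n f
    using that integrable_bdd_meas_X[of f j "n + k - 1"] integrable_bdd_meas_X[of f j n]
    by (subst sigma_finite_subalgebra.real_cond_exp_AE_eq_iff_set_integral_eq[OF sigma_finite_subalgebra_H])
      auto
  then show ?thesis
    unfolding partially_cid_def using adapted by auto
qed

lemma set_integral_stopped_bounded:
  fixes f :: "'x \<Rightarrow> real"
  assumes cid: "partially_cid M G I X" and j: "j \<in> I" and f: "bdd_meas f"
    and A: "A \<in> sets (H j n)" and \<tau>: "stopping_time G \<tau>"
    and bounds: "\<And>\<omega>. \<omega> \<in> space M \<Longrightarrow> n \<le> \<tau> \<omega> \<and> \<tau> \<omega> \<le> N"
  shows "(\<integral>\<omega>\<in>A. f (X (\<tau> \<omega> + 1) j \<omega>) \<partial>M) = (\<integral>\<omega>\<in>A. f (X (N + 1) j \<omega>) \<partial>M)"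
proof -
  define A' where "A' t = A \<inter> {\<omega>\<in>space M. \<tau> \<omega> = t}" for t
  have A'_H: "A' t \<in> sets (H j t)" if "n \<le> t" for t
  proof -
    have "{\<omega>\<in>space M. \<tau> \<omega> = t} \<in> sets (G t)"
      using filtration.stopping_time_eq_const[OF filtration_G \<tau>] by (simp add: pred_def)
    then show ?thesis
      unfolding A'_def using A sets_H_mono[OF that] sets_G_subset_H by blast
  qed
  then have A'_M: "A' t \<in> sets M" if "n \<le> t" for t
    using subalgebra_H that by (auto simp: subalgebra_def)
  have A_eq: "A = (\<Union>t\<in>{n..N}. A' t)"
    using bounds sets.sets_into_space[OF A] by (auto simp: A'_def)
  have "disjoint_family_on A' {n..N}"
    by (auto simp: disjoint_family_on_def A'_def)
  then have split: "(\<integral>\<omega>\<in>A. g \<omega> \<partial>M) = (\<Sum>t\<in>{n..N}. \<integral>\<omega>\<in>A' t. g \<omega> \<partial>M)" if "integrable M g" for g :: "'w \<Rightarrow> real"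
    unfolding A_eq using that A'_M
    by (intro set_integral_finite_Union) (auto intro: set_integrable_of_integrable)
  have "(\<integral>\<omega>\<in>A' t. f (X (\<tau> \<omega> + 1) j \<omega>) \<partial>M) = (\<integral>\<omega>\<in>A' t. f (X (N + 1) j \<omega>) \<partial>M)"
    if t: "t \<in> {n..N}" for t
  proof -
    have "(\<integral>\<omega>\<in>A' t. f (X (\<tau> \<omega> + 1) j \<omega>) \<partial>M) = (\<integral>\<omega>\<in>A' t. f (X (t + 1) j \<omega>) \<partial>M)"
      using A'_M t by (intro set_lebesgue_integral_cong) (auto simp: A'_def)
    also have "\<dots> = (\<integral>\<omega>\<in>A' t. f (X (t + (N - t + 1)) j \<omega>) \<partial>M)"
      using cid j f A'_H t unfolding partially_cid_iff_set_integral by (metis atLeastAtMost_iff le_add2)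
    finally show ?thesis using t by simp
  qed
  then show ?thesis
    using split[OF integrable_bdd_meas_X] f j
      split[OF integrable_bdd_meas_X_random_time[OF f j measurable_stopping_time_count_space[OF \<tau>]]]
    by simp
qed

lemma set_integral_stopped:
  fixes f :: "'x \<Rightarrow> real"
  assumes cid: "partially_cid M G I X" and j: "j \<in> I" and f: "bdd_meas f"
    and A: "A \<in> sets (H j n)" and \<tau>: "stopping_time G \<tau>" and ge: "\<And>\<omega>. \<omega> \<in> space M \<Longrightarrow> n \<le> \<tau> \<omega>"
  shows "(\<integral>\<omega>\<in>A. f (X (\<tau> \<omega> + 1) j \<omega>) \<partial>M) = (\<integral>\<omega>\<in>A. f (X (n + 1) j \<omega>) \<partial>M)"
proof -
  obtain B where B: "\<And>x. \<bar>f x\<bar> \<le> B"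
    using bdd_meas_bounded[OF f] by blast
  have A_M: "A \<in> sets M"
    using A subalgebra_H by (auto simp: subalgebra_def)
  have \<tau>N: "stopping_time G (\<lambda>\<omega>. min (\<tau> \<omega>) N)" for N
    by (rule stopping_time_min[OF \<tau> stopping_time_const])
  note integrable_stopped = integrable_bdd_meas_X_random_time[OF f j measurable_stopping_time_count_space]
  have "(\<lambda>N. \<integral>\<omega>\<in>A. f (X (min (\<tau> \<omega>) N + 1) j \<omega>) \<partial>M)
      \<longlonglongrightarrow> (\<integral>\<omega>\<in>A. f (X (\<tau> \<omega> + 1) j \<omega>) \<partial>M)"
    unfolding set_lebesgue_integral_def
  proof (rule integral_dominated_convergence[where w="\<lambda>_. B"])
    show "AE \<omega> in M. (\<lambda>N. indicator A \<omega> *\<^sub>R f (X (min (\<tau> \<omega>) N + 1) j \<omega>))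
        \<longlonglongrightarrow> indicator A \<omega> *\<^sub>R f (X (\<tau> \<omega> + 1) j \<omega>)"
    proof (rule AE_I2)
      fix \<omega>
      show "(\<lambda>N. indicator A \<omega> *\<^sub>R f (X (min (\<tau> \<omega>) N + 1) j \<omega>))
          \<longlonglongrightarrow> indicator A \<omega> *\<^sub>R f (X (\<tau> \<omega> + 1) j \<omega>)"
        by (intro tendsto_eventually eventually_mono[OF eventually_ge_at_top[of "\<tau> \<omega>"]]) simp
    qed
    show "AE \<omega> in M. norm (indicator A \<omega> *\<^sub>R f (X (min (\<tau> \<omega>) N + 1) j \<omega>)) \<le> B" for N
      using B order_trans[OF abs_ge_zero B] by (auto split: split_indicator)
  qed (use A_M integrable_stopped[OF \<tau>N] integrable_stopped[OF \<tau>] in auto)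
  moreover have "(\<integral>\<omega>\<in>A. f (X (min (\<tau> \<omega>) N + 1) j \<omega>) \<partial>M) = (\<integral>\<omega>\<in>A. f (X (n + 1) j \<omega>) \<partial>M)"
    if "n \<le> N" for N
    using set_integral_stopped_bounded[OF cid j f A \<tau>N, of N]
      set_integral_stopped_bounded[OF cid j f A stopping_time_const, of n N] ge that by simp
  then have "(\<lambda>N. \<integral>\<omega>\<in>A. f (X (min (\<tau> \<omega>) N + 1) j \<omega>) \<partial>M)
      \<longlonglongrightarrow> (\<integral>\<omega>\<in>A. f (X (n + 1) j \<omega>) \<partial>M)"
    by (intro tendsto_eventually eventually_mono[OF eventually_ge_at_top[of n]])
  ultimately show ?thesis
    by (rule LIMSEQ_unique)
qed

lemma partially_cid_imp_distr_eq:
  assumes cid: "partially_cid M G I X" and j: "j \<in> I"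
    and \<tau>: "stopping_time G \<tau>" and ge: "\<forall>\<omega>\<in>space M. n \<le> \<tau> \<omega>"
  shows "distr M (PiM (I - {j}) (\<lambda>_. borel) \<Otimes>\<^sub>M borel) (\<lambda>\<omega>. (rest_row j n \<omega>, X (\<tau> \<omega> + 1) j \<omega>))
       = distr M (PiM (I - {j}) (\<lambda>_. borel) \<Otimes>\<^sub>M borel) (\<lambda>\<omega>. (rest_row j n \<omega>, X (n + 1) j \<omega>))"
proof (rule distr_pair_eqI[OF finite_measure_axioms measurable_rest_row])
  show "(\<lambda>\<omega>. X (\<tau> \<omega> + 1) j \<omega>) \<in> borel_measurable M"
    using measurable_X_random_time[OF j measurable_stopping_time_count_space[OF \<tau>]] .
  show "X (n + 1) j \<in> borel_measurable M"
    using measurable_X j by simp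
  fix a :: "('i \<Rightarrow> 'x) set" and b :: "'x set"
  assume a: "a \<in> sets (PiM (I - {j}) (\<lambda>_. borel))" and b: "b \<in> sets borel"
  let ?A = "rest_row j n -` a \<inter> space M"
  have A_H: "?A \<in> sets (H j n)"
    using measurable_sets[OF measurable_rest_row_H a] by simp
  have "measure M {\<omega>\<in>space M. rest_row j n \<omega> \<in> a \<and> Z \<omega> \<in> b} = (\<integral>\<omega>\<in>?A. indicator b (Z \<omega>) \<partial>M)"
    for Z :: "'w \<Rightarrow> 'x"
  proof -
    have "{\<omega>\<in>space M. rest_row j n \<omega> \<in> a \<and> Z \<omega> \<in> b} = {\<omega>\<in>?A. Z \<omega> \<in> b}"
      by auto
    then show ?thesis
      using measure_preimage_eq_set_integral[of ?A M Z b] by simp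
  qed
  then show "measure M {\<omega>\<in>space M. rest_row j n \<omega> \<in> a \<and> X (\<tau> \<omega> + 1) j \<omega> \<in> b}
      = measure M {\<omega>\<in>space M. rest_row j n \<omega> \<in> a \<and> X (n + 1) j \<omega> \<in> b}"
    using set_integral_stopped[OF cid j bdd_meas_indicator[OF b] A_H \<tau>] ge by simp
qed

definition rect_sets :: "'i \<Rightarrow> nat \<Rightarrow> 'w set set" where
  "rect_sets j n = {B \<inter> rest_row j n -` C | B C. B \<in> sets (G n) \<and> C \<in> sets (PiM (I - {j}) (\<lambda>_. borel))}"

lemma rect_setsI:
  "B \<in> sets (G n) \<Longrightarrow> C \<in> sets (PiM (I - {j}) (\<lambda>_. borel)) \<Longrightarrow> B \<inter> rest_row j n -` C \<in> rect_sets j n"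
  unfolding rect_sets_def by blast

lemma Int_stable_rect_sets: "Int_stable (rect_sets j n)"
  unfolding Int_stable_def
proof (intro ballI)
  fix Z Z' assume "Z \<in> rect_sets j n" "Z' \<in> rect_sets j n"
  then obtain B C B' C' where "Z = B \<inter> rest_row j n -` C" "Z' = B' \<inter> rest_row j n -` C'"
    and "B \<in> sets (G n)" "C \<in> sets (PiM (I - {j}) (\<lambda>_. borel))"
    and "B' \<in> sets (G n)" "C' \<in> sets (PiM (I - {j}) (\<lambda>_. borel))"
    unfolding rect_sets_def by blast
  moreover from this have "Z \<inter> Z' = (B \<inter> B') \<inter> rest_row j n -` (C \<inter> C')"
    by auto
  ultimately show "Z \<inter> Z' \<in> rect_sets j n"
    using rect_setsI[of "B \<inter> B'" n "C \<inter> C'" j] by (simp only: sets.Int)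
qed

lemma rect_sets_subset_H: "rect_sets j n \<subseteq> sets (H j n)"
proof
  fix Z assume "Z \<in> rect_sets j n"
  then obtain B C where Z: "Z = B \<inter> rest_row j n -` C" and B: "B \<in> sets (G n)"
    and C: "C \<in> sets (PiM (I - {j}) (\<lambda>_. borel))"
    unfolding rect_sets_def by blast
  have "Z = B \<inter> (rest_row j n -` C \<inter> space M)"
    using Z sets.sets_into_space[OF B] by auto
  moreover have "rest_row j n -` C \<inter> space M \<in> sets (H j n)"
    using measurable_sets[OF measurable_rest_row_H C] by simp
  ultimately show "Z \<in> sets (H j n)"
    using B sets_G_subset_H by blast
qed

lemma rest_row_vimage_space:
  "B \<subseteq> space M \<Longrightarrow> B \<inter> rest_row j n -` space (PiM (I - {j}) (\<lambda>_. borel)) = B"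
  using measurable_space[OF measurable_rest_row] by blast

lemma space_in_rect_sets: "space M \<in> rect_sets j n"
  using rect_setsI[where j=j and n=n, OF sets.top sets.top] rest_row_vimage_space[where B="space M" and j=j and n=n]
  by simp

lemma sets_H_eq_sigma_rect_sets: "sets (H j n) = sigma_sets (space M) (rect_sets j n)"
proof
  show "sigma_sets (space M) (rect_sets j n) \<subseteq> sets (H j n)"
    using sets.sigma_sets_subset[OF rect_sets_subset_H] by simp
  have "B \<in> rect_sets j n" if "B \<in> sets (G n)" for B
  proof -
    have "B \<subseteq> space M"
      using sets.sets_into_space[OF that] by simp
    with rect_setsI[where j=j, OF that sets.top] show ?thesis
      by (simp only: rest_row_vimage_space)
  qed
  moreover have "X (Suc n) i -` a \<inter> space M \<in> rect_sets j n"
    if i: "i \<in> I - {j}" and a: "a \<in> sets borel" for i a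
  proof -
    let ?C = "(\<lambda>y. y i) -` a \<inter> space (PiM (I - {j}) (\<lambda>_. borel :: 'x measure))"
    have C: "?C \<in> sets (PiM (I - {j}) (\<lambda>_. borel))"
      using measurable_sets[OF measurable_component_singleton[OF i] a] .
    have "X (Suc n) i -` a \<inter> space M = space M \<inter> rest_row j n -` ?C"
      using measurable_space[OF measurable_rest_row[where j=j and n=n]] i by auto
    with rect_setsI[where j=j and n=n, OF sets.top C] show ?thesis
      by (simp only: space_G)
  qed
  ultimately show "sets (H j n) \<subseteq> sigma_sets (space M) (rect_sets j n)"
    unfolding sets_H by (intro sigma_sets_mono) auto
qed

lemma set_integral_rect_sets_of_distr_eq:
  fixes f :: "'x \<Rightarrow> real"
  assumes distr_eq: "\<And>\<tau>. stopping_time G \<tau> \<and> (\<forall>\<omega>\<in>space M. n \<le> \<tau> \<omega>) \<Longrightarrow>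
      distr M (PiM (I - {j}) (\<lambda>_. borel) \<Otimes>\<^sub>M borel) (\<lambda>\<omega>. (rest_row j n \<omega>, X (\<tau> \<omega> + 1) j \<omega>))
    = distr M (PiM (I - {j}) (\<lambda>_. borel) \<Otimes>\<^sub>M borel) (\<lambda>\<omega>. (rest_row j n \<omega>, X (n + 1) j \<omega>))"
    and j: "j \<in> I" and f: "bdd_meas f" and k: "1 \<le> k" and Z: "Z \<in> rect_sets j n"
  shows "(\<integral>\<omega>\<in>Z. f (X (n + k) j \<omega>) \<partial>M) = (\<integral>\<omega>\<in>Z. f (X (n + 1) j \<omega>) \<partial>M)"
proof -
  obtain B C where Z_eq: "Z = B \<inter> rest_row j n -` C" and B: "B \<in> sets (G n)"
    and C: "C \<in> sets (PiM (I - {j}) (\<lambda>_. borel))"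
    using Z unfolding rect_sets_def by blast
  define \<tau> where "\<tau> \<omega> = (if \<omega> \<in> B then n + k - 1 else n)" for \<omega>
  have \<tau>: "stopping_time G \<tau>"
    unfolding \<tau>_def using k by (intro filtration.stopping_time_two_valued[OF filtration_G B]) simp
  define S where "S = rest_row j n -` C \<inter> space M"
  have S: "S \<in> sets M"
    unfolding S_def using measurable_sets[OF measurable_rest_row C] .
  have B_M: "B \<in> sets M"
    using B sets_G_subset_M by blast
  have Z_S: "Z = S \<inter> B" and S_eq: "S = Z \<union> (S - B)"
    using sets.sets_into_space[OF B_M] by (auto simp: Z_eq S_def)
  have "\<forall>\<omega>\<in>space M. n \<le> \<tau> \<omega>"
    using k by (auto simp: \<tau>_def)
  then have "(\<integral>\<omega>\<in>S. f (X (\<tau> \<omega> + 1) j \<omega>) \<partial>M) = (\<integral>\<omega>\<in>S. f (X (n + 1) j \<omega>) \<partial>M)"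
    unfolding S_def using f j measurable_X[of "n + 1" j]
    by (intro set_integral_vimage_eq_of_distr_pair_eq[OF measurable_rest_row
          measurable_X_random_time[OF j measurable_stopping_time_count_space[OF \<tau>]] _ C
          _ distr_eq[OF conjI[OF \<tau>]]]) (auto simp: bdd_meas_def)
  moreover have "(\<integral>\<omega>\<in>S. Y \<omega> \<partial>M) = (\<integral>\<omega>\<in>Z. Y \<omega> \<partial>M) + (\<integral>\<omega>\<in>S - B. Y \<omega> \<partial>M)"
    if "integrable M Y" for Y :: "'w \<Rightarrow> real"
    using that S B_M Z_S by (subst S_eq, intro set_integral_Un) (auto intro: set_integrable_of_integrable)
  moreover have "(\<integral>\<omega>\<in>Z. f (X (\<tau> \<omega> + 1) j \<omega>) \<partial>M) = (\<integral>\<omega>\<in>Z. f (X (n + k) j \<omega>) \<partial>M)"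
    using S B_M k by (intro set_lebesgue_integral_cong) (auto simp: Z_S \<tau>_def)
  moreover have "(\<integral>\<omega>\<in>S - B. f (X (\<tau> \<omega> + 1) j \<omega>) \<partial>M) = (\<integral>\<omega>\<in>S - B. f (X (n + 1) j \<omega>) \<partial>M)"
    using S B_M by (intro set_lebesgue_integral_cong) (auto simp: \<tau>_def)
  ultimately show ?thesis
    using integrable_bdd_meas_X[OF f j]
      integrable_bdd_meas_X_random_time[OF f j measurable_stopping_time_count_space[OF \<tau>]]
    by simp
qed

lemma distr_eq_imp_partially_cid:
  assumes "\<forall>n. \<forall>j\<in>I. \<forall>\<tau> :: 'w \<Rightarrow> nat. stopping_time G \<tau> \<and> (\<forall>\<omega>\<in>space M. n \<le> \<tau> \<omega>) \<longrightarrow>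
      distr M (PiM (I - {j}) (\<lambda>_. borel) \<Otimes>\<^sub>M borel) (\<lambda>\<omega>. (rest_row j n \<omega>, X (\<tau> \<omega> + 1) j \<omega>))
    = distr M (PiM (I - {j}) (\<lambda>_. borel) \<Otimes>\<^sub>M borel) (\<lambda>\<omega>. (rest_row j n \<omega>, X (n + 1) j \<omega>))"
  shows "partially_cid M G I X"
  unfolding partially_cid_iff_set_integral
proof (intro ballI allI impI)
  fix j and k n :: nat and f :: "'x \<Rightarrow> real" and A
  assume j: "j \<in> I" and k: "1 \<le> k" and f: "bdd_meas f" and A: "A \<in> sets (H j n)"
  have "n + k = n + k - 1 + 1"
    using k by simp
  then have integrable_k: "integrable M (\<lambda>\<omega>. f (X (n + k) j \<omega>))"
    using integrable_bdd_meas_X[OF f j, of "n + k - 1"] by metis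
  have rect_sets_M: "rect_sets j n \<subseteq> sets M"
    using rect_sets_subset_H[of j n] subalgebra_H[of j n] by (auto simp: subalgebra_def)
  have A_sigma: "A \<in> sigma_sets (space M) (rect_sets j n)"
    using A sets_H_eq_sigma_rect_sets by blast
  note distr_eq = assms[THEN spec[of _ n], THEN bspec[OF _ j], THEN spec, THEN mp]
  show "(\<integral>\<omega>\<in>A. f (X (n + k) j \<omega>) \<partial>M) = (\<integral>\<omega>\<in>A. f (X (n + 1) j \<omega>) \<partial>M)"
    by (rule set_integral_eq_on_sigma_sets[OF Int_stable_rect_sets rect_sets_M space_in_rect_sets
          integrable_k integrable_bdd_meas_X[OF f j]
          set_integral_rect_sets_of_distr_eq[OF distr_eq j f k] A_sigma])
qed

end

theorem mainTheorem3:
  fixes M :: "'w measure"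
    and G :: "nat \<Rightarrow> 'w measure"
    and I :: "'i set"
    and X :: "nat \<Rightarrow> 'i \<Rightarrow> 'w \<Rightarrow> 'x::polish_space"
  assumes "prob_space M"
    and "countable I"
    and "is_filtration M G"
    and "adapted_rows G I X"
  shows "(partially_cid M G I X
           \<longleftrightarrow> (\<forall>j\<in>I. \<forall>f. bdd_meas f \<longrightarrow>
                 martingale M (Gj M G I X j)
                   (\<lambda>n. real_cond_exp M (Gj M G I X j n) (\<lambda>\<omega>. f (X (n + 1) j \<omega>)))))
       \<and> (partially_cid M G I X
           \<longleftrightarrow> (\<forall>n. \<forall>j\<in>I. \<forall>\<tau> :: 'w \<Rightarrow> nat. stopping_time G \<tau> \<and> (\<forall>\<omega>\<in>space M. n \<le> \<tau> \<omega>) \<longrightarrow>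
                 distr M (PiM (I - {j}) (\<lambda>_. borel) \<Otimes>\<^sub>M borel)
                   (\<lambda>\<omega>. (\<lambda>i\<in>I - {j}. X (n + 1) i \<omega>, X (\<tau> \<omega> + 1) j \<omega>))
                 = distr M (PiM (I - {j}) (\<lambda>_. borel) \<Otimes>\<^sub>M borel)
                   (\<lambda>\<omega>. (\<lambda>i\<in>I - {j}. X (n + 1) i \<omega>, X (n + 1) j \<omega>))))"
proof -
  interpret prob_space M by (rule assms(1))
  interpret adapted_array M G I X
    using assms(3,4) by unfold_locales
  show ?thesis
    using partially_cid_iff_martingale partially_cid_imp_distr_eq distr_eq_imp_partially_cid by blast
qed

end
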